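(* Let $\epsilon>0$, $A\in\mathbb{R}^{d_1\times d_2}$ and $$\tilde W(A)=\sup_{\Sigma}\ \langle A,\Sigma\rangle+\frac\epsilon2\log\det(\mathrm{Id}-\Sigma^\top\Sigma),$$ the supremum over $\Sigma\in\mathbb{R}^{d_1\times d_2}$ with $\mathrm{Id}-\Sigma^\top\Sigma\succ0$, and let $\Sigma$ be the maximizer (which satisfies $A=\epsilon\,\Sigma(\mathrm{Id}-\Sigma^\top\Sigma)^{-1}$). Then $$\nabla^2\tilde W(A)=\epsilon\Big(\epsilon^2(\mathrm{Id}-\Sigma^\top\Sigma)^{-1}\otimes(\mathrm{Id}-\Sigma\Sigma^\top)^{-1}+(A^\top\otimes A)\mathbb T\Big)^{-1},$$ where $\mathbb T$ is the linear map with $\mathbb T\,\mathrm{vec}(X)=\mathrm{vec}(X^\top)$.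
   Context: Matrices are identified with vectors via column-stacking $\mathrm{vec}$, with the Kronecker convention $\mathrm{vec}(BXC)=(C^\top\otimes B)\mathrm{vec}(X)$; $\langle A,\Sigma\rangle=\mathrm{tr}(A^\top\Sigma)$. *)

theory Defs
  imports "HOL-Analysis.Analysis"
begin

text \<open>Matrices in R^(m x n) are elements of real^'n^'m (row index 'm, column index 'n).\<close>

definition frob :: "real^'n^'m \<Rightarrow> real^'n^'m \<Rightarrow> real" where
  "frob A S = trace (transpose A ** S)"

definition pos_def :: "real^'n^'n \<Rightarrow> bool" where
  "pos_def M \<longleftrightarrow> transpose M = M \<and> (\<forall>x. x \<noteq> 0 \<longrightarrow> x \<bullet> (M *v x) > 0)"

text \<open>Column-stacking vec: the entry (i,j) of X sits at index (i,j) of the product type,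
  which corresponds to position i + m*j in column-stacking order.\<close>
definition vecm :: "real^'n^'m \<Rightarrow> real^('m \<times> 'n)" where
  "vecm X = (\<chi> p. X $ fst p $ snd p)"

definition unvec :: "real^('m \<times> 'n) \<Rightarrow> real^'n^'m" where
  "unvec v = (\<chi> i j. v $ (i, j))"

text \<open>Kronecker product with the convention vec(B X C) = (C^T \<otimes> B) vec(X):
  for C of size n1 x n2 and B of size m1 x m2,
  (C \<otimes> B) has entry C_{j l} B_{i k} at row (i,j), column (k,l).\<close>
definition kron :: "real^'n2^'n1 \<Rightarrow> real^'m2^'m1 \<Rightarrow> real^('m2 \<times> 'n2)^('m1 \<times> 'n1)" where
  "kron C B = (\<chi> r c. C $ snd r $ snd c * B $ fst r $ fst c)"

text \<open>Commutation matrix T with T vec(X) = vec(X^T), X of size m x n.\<close>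
definition commT :: "real^('m::finite \<times> 'n::finite)^('n \<times> 'm)" where
  "commT = (\<chi> r c. if fst c = snd r \<and> snd c = fst r then 1 else 0)"

definition feasible :: "real^'d2^'d1 \<Rightarrow> bool" where
  "feasible S \<longleftrightarrow> pos_def (mat 1 - transpose S ** S)"

definition objective :: "real \<Rightarrow> real^'d2^'d1 \<Rightarrow> real^'d2^'d1 \<Rightarrow> real" where
  "objective eps A S = frob A S + eps / 2 * ln (det (mat 1 - transpose S ** S))"

definition Wt :: "real \<Rightarrow> real^'d2^'d1 \<Rightarrow> real" where
  "Wt eps A = (SUP S \<in> {S. feasible S}. objective eps A S)"

definition has_hessian :: "(real^'n^'m \<Rightarrow> real) \<Rightarrow> real^('m \<times> 'n)^('m \<times> 'n) \<Rightarrow> real^'n^'m \<Rightarrow> bool" where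
  "has_hessian f H A \<longleftrightarrow> (\<exists>G. (\<forall>\<^sub>F B in nhds A. (f has_derivative (\<lambda>X. frob (G B) X)) (at B))
      \<and> (G has_derivative (\<lambda>X. unvec (H *v vecm X))) (at A))"

end

theory Submission
  imports Defs
begin

(* Write P S = Id - S^T S (one_minus_gram S). Concavity of ln det gives the tangent inequality
   ln det X <= ln det P + tr (P^-1 X) - n, and with it the objective at a feasible S' lies below its
   value at S by at least (eps/2) tr ((P S)^-1 (S' - S)^T (S' - S)) whenever A = eps S (P S)^-1.
   So the stationary points of the objective are exactly its maximisers, and one exists for every A
   (diagonalise A^T A and solve a scalar quadratic for each eigenvalue). By the inverse function
   theorem the maximiser depends differentiably on A: near the given A it is the local inverse G of
   the optimality map F S = eps S (P S)^-1. Comparing the objective at the maximisers for A and B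
   squeezes W~ B - W~ A between <B - A, G A> and <B - A, G B>, so G is the gradient of W~ and the
   Hessian is DG A = (DF S)^-1. Since (Id - S S^T)^-1 = Id + S (P S)^-1 S^T, in vec coordinates
   eps DF S is the matrix eps^2 (P S)^-1 (x) (Id - S S^T)^-1 + (A^T (x) A) T that is inverted in the
   statement. *)

(* Keep products in the form transpose A *v x instead of the row-vector form x v* A. *)
declare transpose_matrix_vector [simp del]

lemma bounded_bilinear_matrix_mult [bounded_bilinear]:
  "bounded_bilinear ((**) :: real^'n^'m \<Rightarrow> real^'k^'n \<Rightarrow> real^'k^'m)"
  unfolding bilinear_conv_bounded_bilinear[symmetric] bilinear_def
  by (auto intro!: linearI simp: matrix_matrix_mult_def vec_eq_iff sum.distrib algebra_simps
      sum_distrib_left)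

interpretation matrix_mult: bounded_bilinear "(**) :: real^'n^'m \<Rightarrow> real^'k^'n \<Rightarrow> real^'k^'m"
  by (rule bounded_bilinear_matrix_mult)

lemma bounded_bilinear_matrix_vector_mult:
  "bounded_bilinear ((*v) :: real^'n^'m \<Rightarrow> real^'n \<Rightarrow> real^'m)"
  unfolding bilinear_conv_bounded_bilinear[symmetric] bilinear_def
  by (auto intro!: linearI simp: matrix_vector_right_distrib matrix_vector_mult_add_rdistrib
      matrix_vector_mult_scaleR scaleR_matrix_vector_assoc)

lemma bounded_linear_transpose [bounded_linear]:
  "bounded_linear (transpose :: real^'n^'m \<Rightarrow> real^'m^'n)"
  unfolding linear_conv_bounded_linear[symmetric]
  by (rule linearI) (simp_all add: transpose_def vec_eq_iff)

lemma transpose_add: "transpose ((A::real^'n^'m) + B) = transpose A + transpose B"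
  by (simp add: transpose_def vec_eq_iff)

lemma transpose_diff: "transpose ((A::real^'n^'m) - B) = transpose A - transpose B"
  by (simp add: transpose_def vec_eq_iff)

lemma trace_scaleR: "trace (c *\<^sub>R (A::real^'n^'n)) = c * trace A"
  by (simp add: trace_def sum_distrib_left)

lemma trace_transpose: "trace (transpose (A::real^'n^'n)) = trace A"
  by (simp add: trace_def transpose_def)

lemma inner_matrix_vector_transpose: "x \<bullet> ((M::real^'n^'m) *v y) = (transpose M *v x) \<bullet> y"
  by (simp add: dot_lmul_matrix transpose_matrix_vector)

lemma frob_eq_inner: "frob A X = A \<bullet> X"
proof -
  have "frob A X = (\<Sum>j\<in>UNIV. \<Sum>k\<in>UNIV. A$k$j * X$k$j)"
    unfolding frob_def trace_def matrix_matrix_mult_def transpose_def by simp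
  also have "\<dots> = A \<bullet> X" by (subst sum.swap) (simp add: inner_vec_def)
  finally show ?thesis .
qed

lemma trace_transpose_mult_self: "trace (transpose D ** D) = D \<bullet> (D::real^'n^'m)"
  using frob_eq_inner[of D D] by (simp add: frob_def)

lemma trace_symmetric_mult_transpose_swap:
  assumes "transpose W = W"
  shows "trace (W ** (transpose U ** V)) = trace (W ** (transpose V ** (U::real^'n^'m)))"
proof -
  have "trace (W ** (transpose U ** V)) = trace (transpose (W ** (transpose U ** V)))"
    by (simp add: trace_transpose)
  also have "\<dots> = trace (W ** (transpose V ** U))"
    using assms trace_mul_sym[of "transpose V ** U" W]
    by (simp add: matrix_transpose_mul matrix_mul_assoc)
  finally show ?thesis .
qed

lemma matrix_inv_left: "invertible (A::real^'n^'n) \<Longrightarrow> matrix_inv A ** A = mat 1"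
  unfolding matrix_inv_def invertible_def by (rule someI2_ex) auto

lemma matrix_inv_right: "invertible (A::real^'n^'n) \<Longrightarrow> A ** matrix_inv A = mat 1"
  unfolding matrix_inv_def invertible_def by (rule someI2_ex) auto

lemma matrix_inv_eqI: "(A::real^'n^'n) ** B = mat 1 \<Longrightarrow> matrix_inv A = B"
  by (metis invertible_right_inverse matrix_inv_left matrix_mul_assoc matrix_mul_lid matrix_mul_rid)

lemma matrix_inv_transpose:
  "invertible (A::real^'n^'n) \<Longrightarrow> matrix_inv (transpose A) = transpose (matrix_inv A)"
  by (rule matrix_inv_eqI) (metis matrix_inv_left matrix_transpose_mul transpose_mat)

lemma matrix_inv_mult:
  assumes "invertible (A::real^'n^'n)" "invertible (B::real^'n^'n)"
  shows "matrix_inv (A ** B) = matrix_inv B ** matrix_inv A"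
proof (rule matrix_inv_eqI)
  have "A ** B ** (matrix_inv B ** matrix_inv A) = A ** (B ** matrix_inv B) ** matrix_inv A"
    by (simp add: matrix_mul_assoc)
  then show "A ** B ** (matrix_inv B ** matrix_inv A) = mat 1"
    by (simp add: matrix_inv_right assms)
qed

lemma matrix_inv_diff:
  fixes X Y :: "real^'n^'n"
  assumes "invertible X" "invertible Y"
  shows "matrix_inv X - matrix_inv Y = matrix_inv X ** (Y - X) ** matrix_inv Y"
  by (simp add: matrix_mult.diff_left matrix_mult.diff_right matrix_mul_assoc[symmetric]
      matrix_inv_left[OF assms(1)] matrix_inv_right[OF assms(2)])

section \<open>Spectral theorem for symmetric matrices\<close>

lemma linear_coeff_eq_0_if_quadratic_nonpos:
  assumes "\<And>t::real. 2*t*a + t^2*b \<le> 0"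
  shows "a = 0"
proof (rule ccontr)
  assume "a \<noteq> 0"
  define s where "s = 1 / (\<bar>b\<bar> + 1)"
  have "s > 0" and "s * \<bar>b\<bar> < 1" by (auto simp: s_def field_simps)
  then have "0 < a^2 * s * (2 - s * \<bar>b\<bar>)" using \<open>a \<noteq> 0\<close> by simp
  also have "\<dots> \<le> a^2 * s * (2 + s * b)"
    using \<open>s > 0\<close> abs_ge_minus_self[of "s * b"] by (intro mult_left_mono) (auto simp: abs_mult)
  also have "\<dots> = 2*(s*a)*a + (s*a)^2*b" by (simp add: power2_eq_square algebra_simps)
  also have "\<dots> \<le> 0" by (rule assms)
  finally show False by simp
qed

lemma rayleigh_maximizer_is_eigenvector:
  fixes M :: "real^'n^'n"
  assumes sym: "transpose M = M" and V: "subspace V" and inv: "\<forall>y\<in>V. M *v y \<in> V"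
    and x: "x \<in> V" "x \<bullet> x = 1"
    and max: "\<And>z. z \<in> V \<Longrightarrow> z \<bullet> (M *v z) \<le> (x \<bullet> (M *v x)) * (z \<bullet> z)"
  shows "M *v x = (x \<bullet> (M *v x)) *\<^sub>R x"
proof -
  define l where "l = x \<bullet> (M *v x)"
  have symq: "u \<bullet> (M *v w) = w \<bullet> (M *v u)" for u w
    by (metis inner_matrix_vector_transpose sym inner_commute)
  have orth: "y \<bullet> (M *v x) = 0" if "y \<in> V" "y \<bullet> x = 0" for y
  proof (rule linear_coeff_eq_0_if_quadratic_nonpos)
    fix t :: real
    define z where "z = x + t *\<^sub>R y"
    have "z \<in> V" using x \<open>y \<in> V\<close> V by (simp add: z_def subspace_add subspace_scale)
    moreover have "z \<bullet> (M *v z) = l + 2*t*(y \<bullet> (M *v x)) + t^2 * (y \<bullet> (M *v y))"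
      unfolding z_def l_def
      by (simp add: matrix_vector_right_distrib matrix_vector_mult_scaleR inner_add_left
          inner_add_right symq[of x y] power2_eq_square algebra_simps)
    moreover have "z \<bullet> z = 1 + t^2 * (y \<bullet> y)"
      unfolding z_def using x \<open>y \<bullet> x = 0\<close>
      by (simp add: inner_add_left inner_add_right inner_commute power2_eq_square algebra_simps)
    ultimately show "2*t*(y \<bullet> (M *v x)) + t^2*(y \<bullet> (M *v y) - l * (y \<bullet> y)) \<le> 0"
      using max[of z] by (simp add: l_def algebra_simps)
  qed
  define w where "w = M *v x - l *\<^sub>R x"
  have "w \<in> V" using x inv V by (simp add: w_def subspace_diff subspace_scale)
  moreover have "w \<bullet> x = 0"
    unfolding w_def l_def using x by (simp add: inner_diff_left inner_diff_right inner_commute)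
  ultimately have "w \<bullet> w = 0"
    using orth by (simp add: w_def inner_diff_right)
  then show ?thesis by (simp add: w_def l_def)
qed

lemma symmetric_eigenvector_in_invariant_subspace:
  fixes M :: "real^'n^'n"
  assumes sym: "transpose M = M" and V: "subspace V" and inv: "\<forall>y\<in>V. M *v y \<in> V"
    and "V \<noteq> {0}"
  obtains x l where "x \<in> V" "norm x = 1" "M *v x = l *\<^sub>R x"
proof -
  define S where "S = sphere (0::real^'n) 1 \<inter> V"
  have "compact S"
    unfolding S_def using compact_Int_closed[OF compact_sphere closed_subspace[OF V]] .
  obtain v where v: "v \<in> V" "v \<noteq> 0" using \<open>V \<noteq> {0}\<close> V subspace_0 by blast
  have unit: "(1 / norm z) *\<^sub>R z \<in> S" if "z \<in> V" "z \<noteq> 0" for z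
    using that V by (simp add: S_def subspace_scale)
  then have "S \<noteq> {}" using v by blast
  moreover have "continuous_on S (\<lambda>x. x \<bullet> (M *v x))"
    by (intro continuous_on_inner continuous_on_id matrix_vector_mult_linear_continuous_on)
  ultimately obtain x where "x \<in> S" and xmax: "\<And>y. y \<in> S \<Longrightarrow> y \<bullet> (M *v y) \<le> x \<bullet> (M *v x)"
    using continuous_attains_sup[OF \<open>compact S\<close>] by blast
  then have x: "x \<in> V" "norm x = 1" by (auto simp: S_def)
  have "z \<bullet> (M *v z) \<le> (x \<bullet> (M *v x)) * (z \<bullet> z)" if "z \<in> V" for z
  proof (cases "z = 0")
    case False
    have "(1 / norm z)^2 * (z \<bullet> (M *v z)) \<le> x \<bullet> (M *v x)"
      using xmax[OF unit[OF \<open>z \<in> V\<close> False]]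
      by (simp add: matrix_vector_mult_scaleR power2_eq_square mult_ac)
    then have "(norm z)^2 * ((1 / norm z)^2 * (z \<bullet> (M *v z))) \<le> (norm z)^2 * (x \<bullet> (M *v x))"
      by (rule mult_left_mono) simp
    moreover have "(norm z)^2 * ((1 / norm z)^2 * (z \<bullet> (M *v z))) = z \<bullet> (M *v z)"
      using False by (simp add: power_one_over)
    ultimately have "z \<bullet> (M *v z) \<le> (norm z)^2 * (x \<bullet> (M *v x))" by linarith
    then show ?thesis by (simp add: power2_norm_eq_inner mult.commute)
  qed simp
  moreover have "x \<bullet> x = 1" using x(2) by (simp add: norm_eq_1)
  ultimately have "M *v x = (x \<bullet> (M *v x)) *\<^sub>R x"
    using rayleigh_maximizer_is_eigenvector[OF sym V inv x(1)] by blast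
  with x show ?thesis by (intro that)
qed

lemma subspace_orthogonal_slice: "subspace V \<Longrightarrow> subspace {y \<in> V. x \<bullet> y = 0}"
  unfolding subspace_def by (auto simp: inner_add_right)

lemma dim_orthogonal_slice_less:
  fixes x :: "'a::euclidean_space"
  assumes V: "subspace V" and "x \<in> V" "x \<noteq> 0"
  shows "dim {y \<in> V. x \<bullet> y = 0} < dim V"
proof (rule dim_psubset)
  have V': "subspace {y \<in> V. x \<bullet> y = 0}" using V by (rule subspace_orthogonal_slice)
  have "x \<notin> {y \<in> V. x \<bullet> y = 0}" using assms(3) by simp
  then have "{y \<in> V. x \<bullet> y = 0} \<subset> V" using assms(2) by blast
  moreover have "span {y \<in> V. x \<bullet> y = 0} = {y \<in> V. x \<bullet> y = 0}" "span V = V"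
    using V' V by (simp_all add: span_eq_iff)
  ultimately show "span {y \<in> V. x \<bullet> y = 0} \<subset> span V" by argo
qed

lemma symmetric_orthonormal_eigenbasis:
  fixes M :: "real^'n^'n"
  assumes sym: "transpose M = M"
  shows "subspace V \<Longrightarrow> \<forall>y\<in>V. M *v y \<in> V \<Longrightarrow>
    \<exists>B. finite B \<and> B \<subseteq> V \<and> V \<subseteq> span B \<and> pairwise orthogonal B
      \<and> (\<forall>b\<in>B. norm b = 1 \<and> (\<exists>l. M *v b = l *\<^sub>R b))"
proof (induction "dim V" arbitrary: V rule: less_induct)
  case less
  show ?case
  proof (cases "V = {0}")
    case True
    then show ?thesis by (intro exI[of _ "{}"]) auto
  next
    case False
    obtain x l where x: "x \<in> V" "norm x = 1" "M *v x = l *\<^sub>R x"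
      using symmetric_eigenvector_in_invariant_subspace[OF sym less.prems False] .
    have "x \<bullet> x = 1" using x(2) by (simp add: norm_eq_1)
    define V' where "V' = {y \<in> V. x \<bullet> y = 0}"
    have V': "subspace V'" unfolding V'_def using less.prems(1) by (rule subspace_orthogonal_slice)
    have inv': "\<forall>y\<in>V'. M *v y \<in> V'"
      using less.prems(2) x(3) inner_matrix_vector_transpose[of x M]
      unfolding V'_def by (auto simp: sym)
    have "dim V' < dim V"
      unfolding V'_def using dim_orthogonal_slice_less less.prems(1) x(1) \<open>x \<bullet> x = 1\<close> by force
    from less.hyps[OF this V' inv'] obtain B where B: "finite B" "B \<subseteq> V'" "V' \<subseteq> span B"
      "pairwise orthogonal B" "\<forall>b\<in>B. norm b = 1 \<and> (\<exists>l. M *v b = l *\<^sub>R b)"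
      by blast
    show ?thesis
    proof (intro exI[of _ "insert x B"] conjI)
      show "V \<subseteq> span (insert x B)"
      proof
        fix v assume "v \<in> V"
        then have "v - (x \<bullet> v) *\<^sub>R x \<in> V'"
          using x(1) less.prems(1) \<open>x \<bullet> x = 1\<close>
          by (simp add: V'_def subspace_diff subspace_scale inner_diff_right)
        then have "v - (x \<bullet> v) *\<^sub>R x \<in> span (insert x B)"
          using B(3) span_mono[of B "insert x B"] by auto
        then show "v \<in> span (insert x B)"
          using span_add[OF _ span_mul[OF span_base[OF insertI1]], of "v - (x \<bullet> v) *\<^sub>R x" x B "x \<bullet> v"]
          by simp
      qed
      show "pairwise orthogonal (insert x B)"
        using B(2,4) unfolding V'_def pairwise_def orthogonal_def by (auto simp: inner_commute)
      show "finite (insert x B)" using B(1) by simp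
      show "insert x B \<subseteq> V" using B(2) x(1) by (auto simp: V'_def)
      show "\<forall>b\<in>insert x B. norm b = 1 \<and> (\<exists>l. M *v b = l *\<^sub>R b)" using B(5) x(2,3) by auto
    qed
  qed
qed

definition diag_mat :: "real^'n \<Rightarrow> real^'n^'n" where
  "diag_mat d = (\<chi> i j. if i = j then d$i else 0)"

lemma symmetric_matrix_diagonalizable:
  fixes M :: "real^'n^'n"
  assumes sym: "transpose M = M"
  obtains Q d where "orthogonal_matrix Q" "M = Q ** diag_mat d ** transpose Q"
proof -
  obtain B where B: "finite B" "UNIV \<subseteq> span B" "pairwise orthogonal B"
    "\<forall>b\<in>B. norm b = 1 \<and> (\<exists>l. M *v b = l *\<^sub>R b)"
    using symmetric_orthonormal_eigenbasis[OF sym, of UNIV] by (auto simp: subspace_UNIV)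
  have "independent B"
    using B(3,4) pairwise_orthogonal_independent by fastforce
  then have "card B = CARD('n)"
    using basis_card_eq_dim[OF _ B(2)] by simp
  then obtain f where f: "bij_betw f (UNIV::'n set) B"
    using finite_same_card_bij[OF _ B(1)] by (metis finite_class.finite_UNIV)
  define d :: "real^'n" where "d = (\<chi> j. SOME l. M *v f j = l *\<^sub>R f j)"
  have eigen: "M *v f j = d$j *\<^sub>R f j" for j
  proof -
    have "\<exists>l. M *v f j = l *\<^sub>R f j" using B(4) bij_betwE[OF f] by blast
    then show ?thesis unfolding d_def vec_lambda_beta by (rule someI_ex)
  qed
  define Q :: "real^'n^'n" where "Q = (\<chi> i j. f j $ i)"
  have "column j Q = f j" for j by (simp add: Q_def column_def vec_eq_iff)
  then have Q: "orthogonal_matrix Q"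
    using B(3,4) bij_betwE[OF f] bij_betw_imp_inj_on[OF f]
    unfolding orthogonal_matrix_orthonormal_columns pairwise_def by (fastforce simp: inj_eq)
  have "M ** Q = Q ** diag_mat d"
    using eigen by (simp add: Q_def diag_mat_def matrix_matrix_mult_def matrix_vector_mult_def
        vec_eq_iff if_distrib if_distribR mult.commute cong: if_cong)
  then have "M = Q ** diag_mat d ** transpose Q"
    using Q by (metis matrix_mul_assoc matrix_mul_rid orthogonal_matrix_def)
  with Q show ?thesis by (rule that)
qed

lemma diag_mat_mult_vector: "diag_mat d *v y = d * y"
  by (simp add: diag_mat_def matrix_vector_mult_def vec_eq_iff if_distrib[of "\<lambda>a. a * b" for b]
      cong: if_cong)

lemma diag_mat_mult: "diag_mat a ** diag_mat b = diag_mat (a * b)"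
  by (simp add: diag_mat_def matrix_matrix_mult_def vec_eq_iff if_distrib[of "\<lambda>a. a * b" for b]
      if_distrib[of "\<lambda>a. b * a" for b] cong: if_cong)

lemma diag_mat_1: "diag_mat 1 = mat 1"
  by (simp add: diag_mat_def mat_def vec_eq_iff)

lemma diag_mat_diff: "diag_mat a - diag_mat b = diag_mat (a - b)"
  by (simp add: diag_mat_def vec_eq_iff)

lemma diag_mat_scaleR: "c *\<^sub>R diag_mat a = diag_mat (c *\<^sub>R a)"
  by (simp add: diag_mat_def vec_eq_iff)

lemma transpose_diag_mat: "transpose (diag_mat d) = diag_mat d"
  by (simp add: diag_mat_def transpose_def vec_eq_iff)

lemma det_diag_mat: "det (diag_mat d) = (\<Prod>i\<in>UNIV. d$i)"
  by (subst det_diagonal) (auto simp: diag_mat_def)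

lemma trace_diag_mat: "trace (diag_mat d) = (\<Sum>i\<in>UNIV. d$i)"
  by (simp add: trace_def diag_mat_def)

lemma det_orthogonal_conj:
  assumes "orthogonal_matrix Q"
  shows "det (Q ** D ** transpose Q) = det (D::real^'n^'n)"
proof -
  have "det Q * det (transpose Q) = 1"
    using assms unfolding orthogonal_matrix_def by (metis det_I det_mul)
  then show ?thesis by (simp add: det_mul)
qed

lemma trace_orthogonal_conj:
  assumes "orthogonal_matrix Q"
  shows "trace (Q ** D ** transpose Q) = trace (D::real^'n^'n)"
proof -
  have "trace (Q ** D ** transpose Q) = trace (transpose Q ** (Q ** D))"
    by (rule trace_mul_sym)
  then show ?thesis using assms by (simp add: matrix_mul_assoc orthogonal_matrix_def)
qed

lemma orthogonal_conj_diag_mat_mult: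
  assumes "orthogonal_matrix Q"
  shows "(Q ** diag_mat a ** transpose Q) ** (Q ** diag_mat b ** transpose Q)
    = Q ** diag_mat (a * b) ** transpose Q"
proof -
  have "(Q ** diag_mat a ** transpose Q) ** (Q ** diag_mat b ** transpose Q)
      = Q ** (diag_mat a ** (transpose Q ** Q) ** diag_mat b) ** transpose Q"
    by (simp add: matrix_mul_assoc)
  also have "\<dots> = Q ** diag_mat (a * b) ** transpose Q"
    using assms by (simp add: orthogonal_matrix_def diag_mat_mult)
  finally show ?thesis .
qed

lemma inner_orthogonal_transpose:
  assumes "orthogonal_matrix (Q::real^'n^'n)"
  shows "(transpose Q *v x) \<bullet> (transpose Q *v x) = x \<bullet> x"
proof -
  have "(transpose Q *v x) \<bullet> (transpose Q *v x) = x \<bullet> (Q *v (transpose Q *v x))"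
    by (rule inner_matrix_vector_transpose[symmetric])
  then show ?thesis using assms by (simp add: matrix_vector_mul_assoc orthogonal_matrix_def)
qed

lemma quadratic_form_orthogonal_conj:
  "x \<bullet> ((Q ** diag_mat d ** transpose Q) *v x) = (\<Sum>i\<in>UNIV. d$i * ((transpose Q *v x)$i)^2)"
proof -
  have "x \<bullet> ((Q ** diag_mat d ** transpose Q) *v x) = x \<bullet> (Q *v (diag_mat d *v (transpose Q *v x)))"
    by (simp add: matrix_vector_mul_assoc matrix_mul_assoc)
  also have "\<dots> = (transpose Q *v x) \<bullet> (diag_mat d *v (transpose Q *v x))"
    by (rule inner_matrix_vector_transpose)
  finally show ?thesis by (simp add: diag_mat_mult_vector inner_vec_def power2_eq_square mult_ac)
qed

lemma quadratic_form_orthogonal_conj_axis: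
  fixes Q :: "real^'n^'n"
  assumes "orthogonal_matrix Q"
  shows "(Q *v axis i 1) \<bullet> ((Q ** diag_mat d ** transpose Q) *v (Q *v axis i 1)) = d$i"
proof -
  have "transpose Q *v (Q *v axis i 1) = axis i 1"
    using assms by (simp add: orthogonal_matrix_def matrix_vector_mul_assoc)
  then show ?thesis
    unfolding quadratic_form_orthogonal_conj
    by (simp add: axis_def power2_eq_square if_distrib[of "\<lambda>a. b * a" for b] cong: if_cong)
qed

lemma gram_eigenvalue_nonneg:
  fixes Q :: "real^'n^'n" and A :: "real^'n^'m"
  assumes Q: "orthogonal_matrix Q" and AtA: "transpose A ** A = Q ** diag_mat d ** transpose Q"
  shows "d$i \<ge> 0"
proof -
  define x where "x = Q *v axis i 1"
  have "d$i = x \<bullet> ((transpose A ** A) *v x)"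
    using quadratic_form_orthogonal_conj_axis[OF Q, of i d] by (simp add: AtA x_def)
  also have "\<dots> = x \<bullet> (transpose A *v (A *v x))" by (simp add: matrix_vector_mul_assoc)
  also have "\<dots> = (A *v x) \<bullet> (A *v x)" by (simp add: inner_matrix_vector_transpose)
  finally show ?thesis by simp
qed

section \<open>Positive definite matrices\<close>

lemma pos_def_symmetric: "pos_def M \<Longrightarrow> transpose M = M"
  by (simp add: pos_def_def)

lemma pos_def_invertible:
  assumes "pos_def (M::real^'n^'n)"
  shows "invertible M"
proof -
  have "x = 0" if "M *v x = 0" for x
    using assms that unfolding pos_def_def by (metis inner_zero_right less_irrefl)
  then show ?thesis using matrix_left_invertible_ker invertible_left_inverse by blast
qed

lemma pos_def_matrix_inv:
  assumes "pos_def (M::real^'n^'n)"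
  shows "pos_def (matrix_inv M)"
  unfolding pos_def_def
proof (intro conjI allI impI)
  have M: "invertible M" using assms by (rule pos_def_invertible)
  then show "transpose (matrix_inv M) = matrix_inv M"
    using matrix_inv_transpose[OF M] pos_def_symmetric[OF assms] by simp
  fix x :: "real^'n" assume "x \<noteq> 0"
  define y where "y = matrix_inv M *v x"
  have x: "x = M *v y" by (simp add: y_def matrix_vector_mul_assoc matrix_inv_right[OF M])
  then have "y \<noteq> 0" using \<open>x \<noteq> 0\<close> by auto
  then have "y \<bullet> (M *v y) > 0" using assms unfolding pos_def_def by blast
  moreover have "x \<bullet> (matrix_inv M *v x) = (M *v y) \<bullet> y"
    unfolding y_def[symmetric] by (subst x) (rule refl)
  ultimately show "x \<bullet> (matrix_inv M *v x) > 0" by (simp add: inner_commute)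
qed

lemma pos_def_congruence:
  assumes X: "pos_def (X::real^'n^'n)" and C: "invertible (C::real^'n^'n)"
  shows "pos_def (transpose C ** X ** C)"
  unfolding pos_def_def
proof (intro conjI allI impI)
  show "transpose (transpose C ** X ** C) = transpose C ** X ** C"
    using pos_def_symmetric[OF X] by (simp add: matrix_transpose_mul matrix_mul_assoc)
  fix x :: "real^'n" assume "x \<noteq> 0"
  have "x = matrix_inv C *v (C *v x)" by (simp add: matrix_vector_mul_assoc matrix_inv_left[OF C])
  then have "C *v x \<noteq> 0" using \<open>x \<noteq> 0\<close> by auto
  then have "(C *v x) \<bullet> (X *v (C *v x)) > 0" using X unfolding pos_def_def by blast
  also have "(C *v x) \<bullet> (X *v (C *v x)) = x \<bullet> (transpose C *v (X *v (C *v x)))"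
    by (simp add: inner_matrix_vector_transpose)
  finally show "x \<bullet> ((transpose C ** X ** C) *v x) > 0"
    by (simp add: matrix_vector_mul_assoc matrix_mul_assoc)
qed

lemma pos_def_orthogonal_conj_iff:
  fixes Q :: "real^'n^'n"
  assumes Q: "orthogonal_matrix Q"
  shows "pos_def (Q ** diag_mat d ** transpose Q) \<longleftrightarrow> (\<forall>i. d$i > 0)"
proof
  assume pd: "pos_def (Q ** diag_mat d ** transpose Q)"
  show "\<forall>i. d$i > 0"
  proof
    fix i
    have "transpose Q *v (Q *v axis i 1) = axis i 1"
      using Q by (simp add: orthogonal_matrix_def matrix_vector_mul_assoc)
    then have "Q *v axis i 1 \<noteq> 0" by (auto simp: axis_eq_0_iff)
    then show "d$i > 0"
      using pd quadratic_form_orthogonal_conj_axis[OF Q] unfolding pos_def_def by metis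
  qed
next
  assume d: "\<forall>i. d$i > 0"
  show "pos_def (Q ** diag_mat d ** transpose Q)"
    unfolding pos_def_def
  proof (intro conjI allI impI)
    show "transpose (Q ** diag_mat d ** transpose Q) = Q ** diag_mat d ** transpose Q"
      by (simp add: matrix_transpose_mul transpose_diag_mat matrix_mul_assoc)
    fix x :: "real^'n" assume "x \<noteq> 0"
    then have "transpose Q *v x \<noteq> 0"
      using Q by (metis matrix_vector_mul_assoc matrix_vector_mul_lid matrix_vector_mult_0_right
          orthogonal_matrix_def)
    then obtain i where i: "(transpose Q *v x)$i \<noteq> 0" by (auto simp: vec_eq_iff)
    have "0 < d$i * ((transpose Q *v x)$i)^2" using d i by simp
    also have "\<dots> \<le> (\<Sum>j\<in>UNIV. d$j * ((transpose Q *v x)$j)^2)"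
      by (rule member_le_sum) (auto intro: mult_nonneg_nonneg less_imp_le[OF spec[OF d]])
    finally show "0 < x \<bullet> ((Q ** diag_mat d ** transpose Q) *v x)"
      unfolding quadratic_form_orthogonal_conj .
  qed
qed

lemma pos_def_diagonalizable:
  assumes "pos_def (M::real^'n^'n)"
  obtains Q d where "orthogonal_matrix Q" "M = Q ** diag_mat d ** transpose Q" "\<forall>i. d$i > 0"
proof -
  obtain Q d where "orthogonal_matrix Q" "M = Q ** diag_mat d ** transpose Q"
    using symmetric_matrix_diagonalizable pos_def_symmetric[OF assms] by metis
  with assms pos_def_orthogonal_conj_iff that show ?thesis by blast
qed

lemma pos_def_det_pos: "pos_def (M::real^'n^'n) \<Longrightarrow> det M > 0"
  by (erule pos_def_diagonalizable) (simp add: det_orthogonal_conj det_diag_mat prod_pos)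

lemma pos_def_lower_bound:
  assumes "pos_def (M::real^'n^'n)"
  obtains m where "m > 0" "\<And>x. m * (x \<bullet> x) \<le> x \<bullet> (M *v x)"
proof -
  obtain Q d where Q: "orthogonal_matrix Q" and M: "M = Q ** diag_mat d ** transpose Q"
    and d: "\<forall>i. d$i > 0"
    using pos_def_diagonalizable[OF assms] by blast
  define m where "m = Min (range (\<lambda>i. d$i))"
  have "m > 0" unfolding m_def using d by (subst Min_gr_iff) auto
  moreover have "m * (x \<bullet> x) \<le> x \<bullet> (M *v x)" for x
  proof -
    have "m * (x \<bullet> x) = (\<Sum>i\<in>UNIV. m * ((transpose Q *v x)$i)^2)"
      unfolding inner_orthogonal_transpose[OF Q, of x, symmetric]
      by (simp add: inner_vec_def power2_eq_square sum_distrib_left)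
    also have "\<dots> \<le> (\<Sum>i\<in>UNIV. d$i * ((transpose Q *v x)$i)^2)"
      unfolding m_def by (intro sum_mono mult_right_mono Min_le) auto
    also have "\<dots> = x \<bullet> (M *v x)" unfolding M quadratic_form_orthogonal_conj ..
    finally show ?thesis .
  qed
  ultimately show ?thesis by (rule that)
qed

lemma pos_def_stable:
  assumes "pos_def (M::real^'n^'n)"
  obtains e where "e > 0" "\<And>N. transpose N = N \<Longrightarrow> dist N M < e \<Longrightarrow> pos_def N"
proof -
  obtain m where "m > 0" and m: "\<And>x. m * (x \<bullet> x) \<le> x \<bullet> (M *v x)"
    using pos_def_lower_bound[OF assms] by blast
  obtain K where "K > 0" and K: "\<And>N x. norm ((N::real^'n^'n) *v x) \<le> norm N * norm x * K"
    using bounded_bilinear.pos_bounded[OF bounded_bilinear_matrix_vector_mult] by blast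
  show ?thesis
  proof
    show "m / K > 0" using \<open>m > 0\<close> \<open>K > 0\<close> by simp
    fix N :: "real^'n^'n" assume "transpose N = N" "dist N M < m / K"
    then have "norm (N - M) * K < m" using \<open>K > 0\<close> by (simp add: dist_norm field_simps)
    show "pos_def N"
      unfolding pos_def_def
    proof (intro conjI allI impI \<open>transpose N = N\<close>)
      fix x :: "real^'n" assume "x \<noteq> 0"
      have "\<bar>x \<bullet> ((N - M) *v x)\<bar> \<le> norm x * (norm (N - M) * norm x * K)"
        using Cauchy_Schwarz_ineq2[of x "(N - M) *v x"] K[of "N - M" x]
        by (meson mult_left_mono norm_ge_zero order_trans)
      also have "\<dots> < m * (x \<bullet> x)"
        using \<open>norm (N - M) * K < m\<close> \<open>x \<noteq> 0\<close>
        by (simp add: power2_norm_eq_inner[symmetric] power2_eq_square mult_ac)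
      finally show "x \<bullet> (N *v x) > 0"
        using m[of x] by (simp add: matrix_vector_mult_diff_rdistrib inner_diff_right)
    qed
  qed
qed

lemma pos_def_sqrt:
  assumes "pos_def (P::real^'n^'n)"
  obtains R where "pos_def R" "R ** R = P"
proof -
  obtain Q d where Q: "orthogonal_matrix Q" and P: "P = Q ** diag_mat d ** transpose Q"
    and d: "\<forall>i. d$i > 0"
    using pos_def_diagonalizable[OF assms] by blast
  define s where "s = (\<chi> i. sqrt (d$i))"
  have "pos_def (Q ** diag_mat s ** transpose Q)"
    using d by (simp add: pos_def_orthogonal_conj_iff[OF Q] s_def)
  moreover have "s * s = d" using d by (simp add: s_def vec_eq_iff less_imp_le)
  then have "(Q ** diag_mat s ** transpose Q) ** (Q ** diag_mat s ** transpose Q) = P"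
    by (simp add: orthogonal_conj_diag_mat_mult[OF Q] P)
  ultimately show ?thesis by (rule that)
qed

lemma ln_det_le_trace:
  assumes "pos_def (M::real^'n^'n)"
  shows "ln (det M) \<le> trace M - real CARD('n)"
proof -
  obtain Q d where Q: "orthogonal_matrix Q" and M: "M = Q ** diag_mat d ** transpose Q"
    and d: "\<forall>i. d$i > 0"
    using pos_def_diagonalizable[OF assms] by blast
  have "ln (det M) = (\<Sum>i\<in>UNIV. ln (d$i))"
    using d by (simp add: M det_orthogonal_conj[OF Q] det_diag_mat ln_prod less_imp_neq[symmetric])
  also have "\<dots> \<le> (\<Sum>i\<in>UNIV. d$i - 1)"
    using d by (intro sum_mono ln_le_minus_one) auto
  also have "\<dots> = trace M - real CARD('n)"
    by (simp add: M trace_orthogonal_conj[OF Q] trace_diag_mat sum_subtractf)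
  finally show ?thesis .
qed

lemma ln_det_le_tangent:
  assumes X: "pos_def (X::real^'n^'n)" and P: "pos_def P"
  shows "ln (det X) \<le> ln (det P) + trace (matrix_inv P ** X) - real CARD('n)"
proof -
  obtain R where R: "pos_def R" "R ** R = P" using pos_def_sqrt[OF P] .
  have "invertible R" using R(1) by (rule pos_def_invertible)
  define S where "S = matrix_inv R"
  have S: "S ** R = mat 1" "transpose S = S"
    using \<open>invertible R\<close> matrix_inv_transpose[OF \<open>invertible R\<close>] pos_def_symmetric[OF R(1)]
    by (simp_all add: S_def matrix_inv_left)
  then have "invertible S" using invertible_right_inverse by blast
  define M where "M = S ** X ** S"
  have "pos_def M" using pos_def_congruence[OF X \<open>invertible S\<close>] by (simp add: M_def S(2))
  have "det X = det P * det M"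
  proof -
    have "det S * det R = 1" using S(1) by (metis det_I det_mul)
    moreover have "det P * det M = (det S * det R) * (det S * det R) * det X"
      unfolding M_def R(2)[symmetric] det_mul by (simp add: mult_ac)
    ultimately show ?thesis by simp
  qed
  moreover have "trace M = trace (matrix_inv P ** X)"
  proof -
    have "trace M = trace (S ** S ** X)"
      unfolding M_def using trace_mul_sym[of "S ** X" S] by (simp add: matrix_mul_assoc)
    also have "S ** S = matrix_inv P"
      unfolding S_def R(2)[symmetric] using matrix_inv_mult[OF \<open>invertible R\<close> \<open>invertible R\<close>] by simp
    finally show ?thesis .
  qed
  ultimately show ?thesis
    using ln_det_le_trace[OF \<open>pos_def M\<close>] pos_def_det_pos[OF P] pos_def_det_pos[OF \<open>pos_def M\<close>]
    by (simp add: ln_mult)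
qed

lemma trace_mult_gram:
  "trace (W ** (transpose D ** D)) = (\<Sum>k\<in>UNIV. (D$k) \<bullet> (W *v (D$k)))"
proof -
  have "trace (W ** (transpose D ** D)) = trace (D ** (W ** transpose D))"
    by (metis matrix_mul_assoc trace_mul_sym)
  also have "\<dots> = (\<Sum>k\<in>UNIV. \<Sum>j\<in>UNIV. \<Sum>i\<in>UNIV. D$k$j * (W$j$i * D$k$i))"
    by (simp add: trace_def matrix_matrix_mult_def transpose_def sum_distrib_left)
  also have "\<dots> = (\<Sum>k\<in>UNIV. (D$k) \<bullet> (W *v (D$k)))"
    by (simp add: inner_vec_def matrix_vector_mult_def sum_distrib_left)
  finally show ?thesis .
qed

lemma trace_pos_def_mult_gram_nonneg:
  assumes "pos_def W"
  shows "0 \<le> trace (W ** (transpose D ** D))"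
  unfolding trace_mult_gram
  using assms unfolding pos_def_def by (intro sum_nonneg) (metis inner_zero_left less_imp_le order_refl)

lemma trace_pos_def_mult_gram_pos:
  assumes "pos_def W" "D \<noteq> 0"
  shows "0 < trace (W ** (transpose D ** D))"
proof -
  obtain k where "D$k \<noteq> 0" using assms(2) by (auto simp: vec_eq_iff)
  then have "0 < (D$k) \<bullet> (W *v (D$k))" using assms(1) unfolding pos_def_def by blast
  also have "\<dots> \<le> (\<Sum>k\<in>UNIV. (D$k) \<bullet> (W *v (D$k)))"
    using assms(1) unfolding pos_def_def
    by (intro member_le_sum) (auto, metis inner_zero_left less_imp_le order_refl)
  finally show ?thesis unfolding trace_mult_gram .
qed

lemma trace_pos_def_conj_square_nonneg:
  assumes W: "pos_def (W::real^'n^'n)" and E: "transpose E = E"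
  shows "0 \<le> trace (W ** E ** W ** E)"
proof -
  obtain R where R: "pos_def R" "R ** R = W" using pos_def_sqrt[OF W] .
  define K where "K = R ** E ** R"
  have "transpose K = K"
    using pos_def_symmetric[OF R(1)] E by (simp add: K_def matrix_transpose_mul matrix_mul_assoc)
  have "trace (W ** E ** W ** E) = trace (R ** (R ** E ** R ** R ** E))"
    unfolding R(2)[symmetric] by (simp add: matrix_mul_assoc)
  also have "\<dots> = trace (K ** K)"
    unfolding K_def by (subst trace_mul_sym) (simp add: matrix_mul_assoc)
  also have "\<dots> = trace (transpose K ** K)" using \<open>transpose K = K\<close> by simp
  finally show ?thesis by (simp add: trace_transpose_mult_self)
qed

section \<open>Continuity and derivative of the matrix inverse\<close>

lemma continuous_on_det: "continuous_on S (det :: real^'n^'n \<Rightarrow> real)"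
  unfolding det_def by (intro continuous_intros)

lemma open_invertible: "open {X :: real^'n^'n. invertible X}"
  unfolding invertible_det_nz by (intro open_Collect_neq continuous_on_det continuous_on_const)

lemma matrix_inv_cramer:
  fixes X :: "real^'n^'n"
  assumes "invertible X"
  shows "matrix_inv X = (\<chi> k j. det (\<chi> r c. if c = k then axis j 1 $ r else X $ r $ c) / det X)"
proof -
  have "matrix_inv X *v axis j 1
      = (\<chi> k. det (\<chi> r c. if c = k then axis j 1 $ r else X $ r $ c) / det X)"
    for j
  proof -
    have "X *v (matrix_inv X *v axis j 1) = axis j 1"
      by (simp add: matrix_vector_mul_assoc matrix_inv_right[OF assms])
    then show ?thesis using cramer[of X] assms invertible_det_nz by blast
  qed
  then show ?thesis
    by (simp add: vec_eq_iff matrix_vector_mult_def axis_def if_distrib cong: if_cong)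
qed

lemma continuous_on_matrix_inv: "continuous_on {X :: real^'n^'n. invertible X} matrix_inv"
proof (rule continuous_on_eq)
  have entry: "continuous_on S (\<lambda>X::real^'n^'n. if c = k then a else X $ r $ c)" for S c k r a
    by (cases "c = k") (auto intro!: continuous_intros)
  show "continuous_on {X :: real^'n^'n. invertible X}
     (\<lambda>X. \<chi> k j. det (\<chi> r c. if c = k then axis j 1 $ r else X $ r $ c) / det X)"
    by (intro continuous_intros continuous_on_compose2[OF continuous_on_det])
      (auto simp: invertible_det_nz intro: entry)
qed (simp add: matrix_inv_cramer)

lemma has_derivative_matrix_inv:
  fixes Y :: "real^'n^'n"
  assumes Y: "invertible Y"
  shows "(matrix_inv has_derivative (\<lambda>H. - (matrix_inv Y ** H ** matrix_inv Y))) (at Y)"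
proof -
  define Yi where "Yi = matrix_inv Y"
  obtain K where "K \<ge> 0"
    and K: "\<And>A B :: real^'n^'n. norm ((A::real^'n^'n) ** B) \<le> norm A * norm B * K"
    using matrix_mult.nonneg_bounded by blast
  obtain e where "e > 0" and e: "ball Y e \<subseteq> {X. invertible X}"
    using open_invertible Y by (metis mem_Collect_eq open_contains_ball)
  show ?thesis
  proof (rule has_derivativeI_sandwich[OF \<open>e > 0\<close>])
    show "bounded_linear (\<lambda>H. - (matrix_inv Y ** H ** matrix_inv Y))"
      by (intro bounded_linear_minus bounded_linear_compose[OF matrix_mult.bounded_linear_left]
          matrix_mult.bounded_linear_right)
    fix X assume "X \<noteq> Y" "dist X Y < e"
    then have X: "invertible X" using e by (auto simp: subset_eq dist_commute)
    have XY: "matrix_inv X ** (X - Y) ** Yi = Yi - matrix_inv X"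
      using matrix_inv_diff[OF X Y] unfolding Yi_def
      by (metis matrix_mult.minus_left matrix_mult.minus_right minus_diff_eq)
    have "norm (matrix_inv X - Yi - - (Yi ** (X - Y) ** Yi))
        = norm ((Yi - matrix_inv X) ** (X - Y) ** Yi)"
      unfolding matrix_mult.diff_left XY by (simp add: algebra_simps)
    also have "\<dots> \<le> norm (Yi - matrix_inv X) * norm (X - Y) * K * norm Yi * K"
      using K[of "(Yi - matrix_inv X) ** (X - Y)" Yi] K[of "Yi - matrix_inv X" "X - Y"] \<open>K \<ge> 0\<close>
      by (meson mult_right_mono norm_ge_zero order_trans)
    finally show "norm (matrix_inv X - matrix_inv Y - - (matrix_inv Y ** (X - Y) ** matrix_inv Y))
        / norm (X - Y)
      \<le> norm (matrix_inv X - Yi) * (K * K * norm Yi)"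
      using \<open>X \<noteq> Y\<close> by (simp add: Yi_def divide_le_eq norm_minus_commute mult_ac)
  next
    have "(matrix_inv \<longlongrightarrow> Yi) (at Y)"
      using continuous_on_matrix_inv open_invertible Y unfolding Yi_def
      by (metis continuous_on_eq_continuous_at isCont_def mem_Collect_eq)
    then show "((\<lambda>X. norm (matrix_inv X - Yi) * (K * K * norm Yi)) \<longlongrightarrow> 0) (at Y)"
      by (intro tendsto_mult_left_zero tendsto_norm_zero LIM_zero)
  qed
qed

section \<open>Column stacking and Kronecker products\<close>

lemma unvec_vecm [simp]: "unvec (vecm X) = X"
  by (simp add: unvec_def vecm_def vec_eq_iff)

lemma vecm_unvec [simp]: "vecm (unvec v) = v"
  by (simp add: unvec_def vecm_def vec_eq_iff)

lemma vecm_zero [simp]: "vecm 0 = 0"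
  by (simp add: vecm_def vec_eq_iff)

lemma vecm_add: "vecm (X + Y) = vecm X + vecm Y"
  by (simp add: vecm_def vec_eq_iff)

lemma vecm_scaleR: "vecm (c *\<^sub>R X) = c *\<^sub>R vecm X"
  by (simp add: vecm_def vec_eq_iff)

lemma vecm_inject: "vecm X = vecm Y \<longleftrightarrow> X = Y"
  by (metis unvec_vecm)

lemma sum_UNIV_prod: "(\<Sum>c\<in>UNIV. f c) = (\<Sum>a\<in>UNIV. \<Sum>b\<in>UNIV. f (a, b))"
  by (simp add: sum.cartesian_product UNIV_Times_UNIV[symmetric] del: UNIV_Times_UNIV)

lemma kron_mult_vecm: "kron C B *v vecm X = vecm (B ** X ** transpose C)"
proof -
  have "(kron C B *v vecm X) $ (i, j) = vecm (B ** X ** transpose C) $ (i, j)" for i j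
  proof -
    have "(kron C B *v vecm X) $ (i, j) = (\<Sum>k\<in>UNIV. \<Sum>l\<in>UNIV. C$j$l * B$i$k * X$k$l)"
      by (simp add: matrix_vector_mult_def kron_def vecm_def sum_UNIV_prod)
    also have "\<dots> = vecm (B ** X ** transpose C) $ (i, j)"
      by (subst sum.swap) (simp add: vecm_def matrix_matrix_mult_def transpose_def
          sum_distrib_right sum_distrib_left mult_ac)
    finally show ?thesis .
  qed
  then show ?thesis by (simp add: vec_eq_iff)
qed

lemma commT_mult_vecm: "commT *v vecm X = vecm (transpose X)"
proof -
  have "(\<Sum>b\<in>UNIV. if a = i \<and> b = j then X$a$b else 0) = (if a = i then X$a$j else 0)" for a i j
    by (cases "a = i") simp_all
  then show ?thesis
    by (simp add: vec_eq_iff matrix_vector_mult_def commT_def vecm_def transpose_def sum_UNIV_prod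
        if_distrib[of "\<lambda>a. a * b" for b] cong: if_cong)
qed

section \<open>The objective and its stationary points\<close>

definition one_minus_gram :: "real^'n^'m \<Rightarrow> real^'n^'n" where
  "one_minus_gram T = mat 1 - transpose T ** T"

definition optimality_map :: "real \<Rightarrow> real^'n^'m \<Rightarrow> real^'n^'m" where
  "optimality_map eps T = eps *\<^sub>R (T ** matrix_inv (one_minus_gram T))"

lemma feasible_iff_pos_def: "feasible T \<longleftrightarrow> pos_def (one_minus_gram T)"
  by (simp add: feasible_def one_minus_gram_def)

lemma objective_le_at_stationary_point:
  fixes B S T :: "real^'n^'m"
  assumes eps: "eps > 0" and S: "feasible S" and B: "B = optimality_map eps S" and T: "feasible T"
  shows "objective eps B T \<le> objective eps B S
    - eps / 2 * trace (matrix_inv (one_minus_gram S) ** (transpose (T - S) ** (T - S)))"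
proof -
  define P where "P = one_minus_gram S"
  define W where "W = matrix_inv P"
  have P: "pos_def P" using S by (simp add: feasible_iff_pos_def P_def)
  have "transpose W = W" unfolding W_def using pos_def_matrix_inv[OF P] by (rule pos_def_symmetric)
  have "W ** P = mat 1" unfolding W_def using pos_def_invertible[OF P] by (rule matrix_inv_left)
  have frob_B: "frob B U = eps * trace (W ** (transpose S ** U))" for U
    using \<open>transpose W = W\<close>
    by (simp add: frob_def B optimality_map_def W_def P_def transpose_scalar matrix_transpose_mul
        matrix_mult.scaleR_left trace_scaleR matrix_mul_assoc)
  have "ln (det (one_minus_gram T))
      \<le> ln (det P) + (trace (W ** (transpose S ** S)) - trace (W ** (transpose T ** T)))"
  proof -
    have "real CARD('n) = trace (W ** P)" using \<open>W ** P = mat 1\<close> by (simp add: trace_I)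
    moreover have "trace (W ** one_minus_gram T) - trace (W ** P)
        = trace (W ** (transpose S ** S)) - trace (W ** (transpose T ** T))"
      by (simp add: one_minus_gram_def P_def matrix_mult.diff_right trace_sub)
    ultimately show ?thesis
      using ln_det_le_tangent[OF T[unfolded feasible_iff_pos_def] P] unfolding W_def by linarith
  qed
  then have "objective eps B T \<le> eps * trace (W ** (transpose S ** T))
      + eps / 2 * (ln (det P) + (trace (W ** (transpose S ** S)) - trace (W ** (transpose T ** T))))"
    using eps by (simp add: objective_def frob_B one_minus_gram_def)
  also have "\<dots> = objective eps B S - eps / 2 * trace (W ** (transpose (T - S) ** (T - S)))"
  proof -
    have expand: "trace (W ** (transpose (T - S) ** (T - S)))
        = trace (W ** (transpose T ** T)) - 2 * trace (W ** (transpose S ** T))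
          + trace (W ** (transpose S ** S))"
      using trace_symmetric_mult_transpose_swap[OF \<open>transpose W = W\<close>, of T S]
      by (simp add: transpose_diff matrix_mult.diff_left matrix_mult.diff_right trace_sub)
    show ?thesis
      unfolding objective_def frob_B expand by (simp add: P_def one_minus_gram_def algebra_simps)
  qed
  finally show ?thesis by (simp add: W_def P_def)
qed

lemma stationary_point_is_maximizer:
  fixes B S T :: "real^'n^'m"
  assumes "eps > 0" "feasible S" "B = optimality_map eps S" "feasible T"
  shows "objective eps B T \<le> objective eps B S"
proof -
  have "pos_def (matrix_inv (one_minus_gram S))"
    using assms(2) by (simp add: feasible_iff_pos_def pos_def_matrix_inv)
  then have "0 \<le> eps / 2 * trace (matrix_inv (one_minus_gram S) ** (transpose (T - S) ** (T - S)))"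
    using trace_pos_def_mult_gram_nonneg[of _ "T - S"] \<open>eps > 0\<close> by simp
  then show ?thesis using objective_le_at_stationary_point[OF assms] by linarith
qed

lemma Wt_eq_objective_at_stationary_point:
  assumes "eps > 0" "feasible S" "B = optimality_map eps S"
  shows "Wt eps B = objective eps B S"
  unfolding Wt_def
  by (rule cSup_eq_maximum) (use assms stationary_point_is_maximizer in auto)

lemma quadratic_positive_root:
  assumes "t \<ge> (0::real)"
  shows "t * (2 / (1 + sqrt (1 + 4*t)))^2 + 2 / (1 + sqrt (1 + 4*t)) = 1"
proof -
  define s where "s = sqrt (1 + 4*t)"
  have "s \<ge> 1" "s^2 = 1 + 4*t" using assms by (simp_all add: s_def)
  then have "4*t = (s - 1) * (1 + s)" by (simp add: algebra_simps power2_eq_square)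
  have "t * (2 / (1 + s))^2 = (4*t) / ((1 + s) * (1 + s))" by (simp add: power2_eq_square)
  also have "\<dots> = (s - 1) / (1 + s)" using \<open>s \<ge> 1\<close> unfolding \<open>4*t = (s - 1) * (1 + s)\<close> by simp
  finally have "t * (2 / (1 + s))^2 + 2 / (1 + s) = 1"
    using \<open>s \<ge> 1\<close> by (simp add: add_divide_distrib[symmetric])
  then show ?thesis by (simp add: s_def)
qed

lemma stationary_point_exists:
  fixes A :: "real^'n^'m"
  assumes eps: "eps > 0"
  obtains S where "feasible S" "optimality_map eps S = A"
proof -
  have "transpose (transpose A ** A) = transpose A ** A" by (simp add: matrix_transpose_mul)
  then obtain Q d where Q: "orthogonal_matrix Q"
    and AtA: "transpose A ** A = Q ** diag_mat d ** transpose Q"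
    by (rule symmetric_matrix_diagonalizable)
  define C where "C v = Q ** diag_mat v ** transpose Q" for v
  have C_mult: "C a ** C b = C (a * b)" for a b
    unfolding C_def by (rule orthogonal_conj_diag_mat_mult[OF Q])
  have C_1: "C 1 = mat 1" using Q by (simp add: C_def diag_mat_1 orthogonal_matrix_def)
  have C_scaleR: "c *\<^sub>R C a = C (c *\<^sub>R a)" for c a
    by (simp add: C_def diag_mat_scaleR[symmetric] matrix_mult.scaleR_left matrix_mult.scaleR_right)
  have C_diff: "C a - C b = C (a - b)" for a b
    by (simp add: C_def diag_mat_diff[symmetric] matrix_mult.diff_left matrix_mult.diff_right)
  have d: "d$i \<ge> 0" for i
    using gram_eigenvalue_nonneg[OF Q AtA] .
  (* p $ i is the positive root of (d $ i / eps^2) * x^2 + x = 1, which makes one_minus_gram S = C p *)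
  define p :: "real^'n" where "p = (\<chi> i. 2 / (1 + sqrt (1 + 4 * (d$i / eps^2))))"
  have "p$i > 0" for i
    using d[of i] by (simp add: p_def add_pos_nonneg)
  then have P: "pos_def (C p)" by (simp add: C_def pos_def_orthogonal_conj_iff[OF Q])
  define S where "S = (1 / eps) *\<^sub>R (A ** C p)"
  have "transpose (C p) = C p" using P by (rule pos_def_symmetric)
  then have "transpose S ** S = (1 / eps^2) *\<^sub>R (C p ** (transpose A ** A) ** C p)"
    by (simp add: S_def transpose_scalar matrix_transpose_mul matrix_mult.scaleR_left
        matrix_mult.scaleR_right matrix_mul_assoc power2_eq_square)
  also have "\<dots> = C ((1 / eps^2) *\<^sub>R (p * d * p))"
    by (simp add: AtA C_def[symmetric] C_mult C_scaleR)
  finally have "one_minus_gram S = C (1 - (1 / eps^2) *\<^sub>R (p * d * p))"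
    by (simp add: one_minus_gram_def C_1[symmetric] C_diff)
  also have "1 - (1 / eps^2) *\<^sub>R (p * d * p) = p"
    using quadratic_positive_root[of "d$i / eps^2" for i] d eps
    by (simp add: vec_eq_iff p_def power2_eq_square field_simps)
  finally have gram: "one_minus_gram S = C p" .
  show ?thesis
  proof
    show "feasible S" using P by (simp add: feasible_iff_pos_def gram)
    show "optimality_map eps S = A"
      unfolding optimality_map_def gram using eps matrix_inv_right[OF pos_def_invertible[OF P]]
      by (simp add: S_def matrix_mult.scaleR_left flip: matrix_mul_assoc)
  qed
qed

lemma maximizer_is_stationary_point:
  fixes A S :: "real^'n^'m"
  assumes eps: "eps > 0" and S: "feasible S"
    and max: "\<forall>S'. feasible S' \<longrightarrow> objective eps A S' \<le> objective eps A S"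
  shows "optimality_map eps S = A"
proof -
  obtain S0 where S0: "feasible S0" and A: "optimality_map eps S0 = A"
    using stationary_point_exists[OF eps] .
  have W: "pos_def (matrix_inv (one_minus_gram S0))"
    using S0 by (simp add: feasible_iff_pos_def pos_def_matrix_inv)
  have "objective eps A S0 \<le> objective eps A S" using max S0 by blast
  then have "eps / 2 * trace (matrix_inv (one_minus_gram S0) ** (transpose (S - S0) ** (S - S0))) \<le> 0"
    using objective_le_at_stationary_point[OF eps S0 A[symmetric] S] by linarith
  then have "S = S0"
    using trace_pos_def_mult_gram_pos[OF W, of "S - S0"] eps by (auto simp: mult_le_0_iff)
  with A show ?thesis by simp
qed

section \<open>The optimality map and its derivative\<close>

definition optimality_map_deriv :: "real \<Rightarrow> real^'n^'m \<Rightarrow> real^'n^'m \<Rightarrow> real^'n^'m" where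
  "optimality_map_deriv eps T D = eps *\<^sub>R (D ** matrix_inv (one_minus_gram T) +
     T ** (matrix_inv (one_minus_gram T) ** (transpose D ** T + transpose T ** D)
       ** matrix_inv (one_minus_gram T)))"

lemma has_derivative_one_minus_gram:
  "(one_minus_gram has_derivative (\<lambda>D. - (transpose D ** T + transpose T ** D))) (at T)"
  unfolding one_minus_gram_def[abs_def]
  by (rule has_derivative_eq_rhs, (rule derivative_intros)+) (simp add: fun_eq_iff add.commute)

lemma bounded_linear_optimality_map_deriv: "bounded_linear (optimality_map_deriv eps T)"
  unfolding optimality_map_deriv_def by (intro bounded_linear_intros)

lemma has_derivative_optimality_map:
  assumes "feasible T"
  shows "(optimality_map eps has_derivative optimality_map_deriv eps T) (at T)"
proof -
  define W where "W = matrix_inv (one_minus_gram T)"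
  have "invertible (one_minus_gram T)"
    using assms by (simp add: feasible_iff_pos_def pos_def_invertible)
  from has_derivative_compose[OF has_derivative_one_minus_gram has_derivative_matrix_inv[OF this]]
  have "((\<lambda>S. matrix_inv (one_minus_gram S)) has_derivative
      (\<lambda>D. W ** (transpose D ** T + transpose T ** D) ** W)) (at T)"
    by (simp add: W_def matrix_mult.minus_left matrix_mult.minus_right matrix_mult.diff_left
        matrix_mult.diff_right matrix_mult.add_left matrix_mult.add_right add.commute)
  then have "(optimality_map eps has_derivative
      (\<lambda>D. eps *\<^sub>R (T ** (W ** (transpose D ** T + transpose T ** D) ** W) + D ** W))) (at T)"
    unfolding optimality_map_def[abs_def] W_def by (intro derivative_intros)
  then show ?thesis
    by (rule has_derivative_eq_rhs) (simp add: fun_eq_iff optimality_map_deriv_def W_def add.commute)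
qed

lemma open_feasible: "open {T :: real^'n^'m. feasible T}"
  unfolding open_dist
proof (intro ballI)
  fix T :: "real^'n^'m" assume "T \<in> {T. feasible T}"
  then obtain e where "e > 0"
    and e: "\<And>N. transpose N = N \<Longrightarrow> dist N (one_minus_gram T) < e \<Longrightarrow> pos_def N"
    using pos_def_stable by (auto simp: feasible_iff_pos_def)
  have "isCont one_minus_gram T"
    using has_derivative_one_minus_gram by (rule has_derivative_continuous)
  then obtain d where "d > 0"
    and d: "\<And>T'. dist T' T < d \<Longrightarrow> dist (one_minus_gram T') (one_minus_gram T) < e"
    using \<open>e > 0\<close> unfolding continuous_at_eps_delta by blast
  have "transpose (one_minus_gram T') = one_minus_gram T'" for T' :: "real^'n^'m"
    by (simp add: one_minus_gram_def transpose_diff matrix_transpose_mul)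
  then show "\<exists>d>0. \<forall>T'. dist T' T < d \<longrightarrow> T' \<in> {T. feasible T}"
    using \<open>d > 0\<close> d e by (auto simp: feasible_iff_pos_def)
qed

lemma continuous_on_optimality_map_deriv:
  "continuous_on {T :: real^'n^'m. feasible T} (\<lambda>T. Blinfun (optimality_map_deriv eps T))"
proof (rule continuous_on_blinfun_componentwise)
  fix D :: "real^'n^'m"
  have "continuous_on UNIV (one_minus_gram :: real^'n^'m \<Rightarrow> _)"
    unfolding one_minus_gram_def[abs_def] by (intro continuous_intros)
  then have "continuous_on {T :: real^'n^'m. feasible T} (\<lambda>T. matrix_inv (one_minus_gram T))"
    by (intro continuous_on_compose2[OF continuous_on_matrix_inv])
      (auto simp: feasible_iff_pos_def pos_def_invertible elim: continuous_on_subset)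
  then show "continuous_on {T :: real^'n^'m. feasible T}
      (\<lambda>T. blinfun_apply (Blinfun (optimality_map_deriv eps T)) D)"
    unfolding bounded_linear_Blinfun_apply[OF bounded_linear_optimality_map_deriv]
      optimality_map_deriv_def
    by (intro continuous_intros)
qed

lemma optimality_map_deriv_eq_0D:
  assumes eps: "eps > 0" and T: "feasible T" and D: "optimality_map_deriv eps T D = 0"
  shows "D = 0"
proof (rule ccontr)
  assume "D \<noteq> 0"
  define W where "W = matrix_inv (one_minus_gram T)"
  define E where "E = transpose D ** T + transpose T ** D"
  define F where "F = W ** E ** W"
  (* trace (transpose D ** optimality_map_deriv eps T D)
     = eps * (trace (W ** (transpose D ** D)) + trace (W ** E ** W ** E) / 2), positive as D <> 0 *)
  have W: "pos_def W" using T by (simp add: W_def feasible_iff_pos_def pos_def_matrix_inv)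
  have E: "transpose E = E" by (simp add: E_def transpose_add matrix_transpose_mul add.commute)
  have "transpose F = F"
    using pos_def_symmetric[OF W] E by (simp add: F_def matrix_transpose_mul matrix_mul_assoc)
  have "trace (E ** F) = 2 * trace (F ** (transpose D ** T))"
    using trace_symmetric_mult_transpose_swap[OF \<open>transpose F = F\<close>, of T D]
    by (simp add: E_def trace_mul_sym[of _ F] matrix_mult.add_right trace_add)
  moreover have "trace (E ** F) = trace (W ** E ** W ** E)"
    using trace_mul_sym[of E F] by (simp add: F_def matrix_mul_assoc)
  ultimately have "0 \<le> trace (F ** (transpose D ** T))"
    using trace_pos_def_conj_square_nonneg[OF W E] by simp
  moreover have "0 < trace (W ** (transpose D ** D))"
    using trace_pos_def_mult_gram_pos[OF W \<open>D \<noteq> 0\<close>] .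
  moreover have "trace (transpose D ** optimality_map_deriv eps T D)
      = eps * (trace (W ** (transpose D ** D)) + trace (F ** (transpose D ** T)))"
    using trace_mul_sym[of "transpose D ** D" W] trace_mul_sym[of "transpose D ** T" F]
    by (simp add: optimality_map_deriv_def W_def[symmetric] E_def[symmetric] F_def[symmetric]
        matrix_mult.scaleR_right matrix_mult.add_right trace_scaleR trace_add matrix_mul_assoc)
  ultimately show False using D eps by (simp add: trace_def)
qed

lemma inj_optimality_map_deriv:
  assumes "eps > 0" "feasible T"
  shows "inj (optimality_map_deriv eps T)"
proof -
  have "linear (optimality_map_deriv eps T)"
    using bounded_linear_optimality_map_deriv by (rule bounded_linear.linear)
  then show ?thesis using optimality_map_deriv_eq_0D[OF assms] by (simp add: linear_injective_0)
qed

lemma matrix_inv_one_minus_outer_gram: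
  fixes S :: "real^'n^'m"
  assumes "invertible (one_minus_gram S)"
  shows "matrix_inv (mat 1 - S ** transpose S)
    = mat 1 + S ** matrix_inv (one_minus_gram S) ** transpose S"
proof (rule matrix_inv_eqI)
  define W where "W = matrix_inv (one_minus_gram S)"
  have "(mat 1 - S ** transpose S) ** (mat 1 + S ** W ** transpose S)
      = mat 1 + S ** (W - mat 1 - transpose S ** S ** W) ** transpose S"
    by (simp add: matrix_mult.diff_left matrix_mult.diff_right matrix_mult.add_left
        matrix_mult.add_right matrix_mul_assoc algebra_simps)
  also have "W - mat 1 - transpose S ** S ** W = one_minus_gram S ** W - mat 1"
    by (simp add: one_minus_gram_def matrix_mult.diff_left)
  also have "\<dots> = 0" using matrix_inv_right[OF assms] by (simp add: W_def)
  finally show "(mat 1 - S ** transpose S) ** (mat 1 + S ** W ** transpose S) = mat 1"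
    by simp
qed

lemma vecm_optimality_map_deriv:
  fixes S D :: "real^'n^'m"
  assumes "feasible S" and A: "A = optimality_map eps S"
  shows "eps *\<^sub>R vecm (optimality_map_deriv eps S D)
    = (eps\<^sup>2 *\<^sub>R kron (matrix_inv (mat 1 - transpose S ** S)) (matrix_inv (mat 1 - S ** transpose S))
        + kron (transpose A) A ** commT) *v vecm D"
proof -
  define W where "W = matrix_inv (one_minus_gram S)"
  have W: "pos_def W" using assms(1) by (simp add: W_def feasible_iff_pos_def pos_def_matrix_inv)
  have outer: "matrix_inv (mat 1 - S ** transpose S) = mat 1 + S ** W ** transpose S"
    unfolding W_def using assms(1)
    by (intro matrix_inv_one_minus_outer_gram pos_def_invertible) (simp add: feasible_iff_pos_def)
  have "(eps\<^sup>2 *\<^sub>R kron (matrix_inv (mat 1 - transpose S ** S)) (matrix_inv (mat 1 - S ** transpose S))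
        + kron (transpose A) A ** commT) *v vecm D
      = vecm (eps\<^sup>2 *\<^sub>R ((mat 1 + S ** W ** transpose S) ** D ** W) + A ** transpose D ** A)"
    by (simp add: matrix_vector_mult_add_rdistrib scaleR_matrix_vector_assoc[symmetric]
        matrix_vector_mul_assoc[symmetric] commT_mult_vecm kron_mult_vecm outer
        W_def[symmetric] one_minus_gram_def[symmetric] pos_def_symmetric[OF W] vecm_add vecm_scaleR)
  also have "eps\<^sup>2 *\<^sub>R ((mat 1 + S ** W ** transpose S) ** D ** W) + A ** transpose D ** A
      = eps *\<^sub>R optimality_map_deriv eps S D"
    by (simp add: A optimality_map_def optimality_map_deriv_def W_def[symmetric] matrix_mult.add_left
        matrix_mult.add_right matrix_mult.scaleR_left matrix_mult.scaleR_right transpose_scalar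
        matrix_mul_assoc power2_eq_square algebra_simps)
  finally show ?thesis by (simp add: vecm_scaleR)
qed

lemma inv_optimality_map_deriv:
  fixes S :: "real^'n^'m"
  assumes eps: "eps > 0" and S: "feasible S" and A: "A = optimality_map eps S"
  defines "M \<equiv> eps\<^sup>2 *\<^sub>R kron (matrix_inv (mat 1 - transpose S ** S))
        (matrix_inv (mat 1 - S ** transpose S))
      + kron (transpose A) A ** commT"
  shows "inv (optimality_map_deriv eps S) = (\<lambda>X. unvec ((eps *\<^sub>R matrix_inv M) *v vecm X))"
proof
  have vec_deriv: "vecm (optimality_map_deriv eps S D) = (1 / eps) *\<^sub>R (M *v vecm D)" for D
  proof -
    have "(1 / eps) *\<^sub>R (eps *\<^sub>R vecm (optimality_map_deriv eps S D)) = (1 / eps) *\<^sub>R (M *v vecm D)"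
      using vecm_optimality_map_deriv[OF S A, of D] by (simp add: M_def)
    then show ?thesis using eps by simp
  qed
  have "v = 0" if "M *v v = 0" for v
  proof -
    have "optimality_map_deriv eps S (unvec v) = 0"
      using vec_deriv[of "unvec v"] that by (simp flip: vecm_inject)
    then have "unvec v = 0" using optimality_map_deriv_eq_0D[OF eps S] by blast
    then show "v = 0" by (metis vecm_unvec vecm_zero)
  qed
  then have "invertible M" using matrix_left_invertible_ker invertible_left_inverse by blast
  fix X
  have "optimality_map_deriv eps S (unvec ((eps *\<^sub>R matrix_inv M) *v vecm X)) = X"
    using eps by (simp flip: vecm_inject add: vec_deriv scaleR_matrix_vector_assoc[symmetric]
        matrix_vector_mult_scaleR matrix_vector_mul_assoc matrix_inv_right[OF \<open>invertible M\<close>])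
  with inj_optimality_map_deriv[OF eps S]
  show "inv (optimality_map_deriv eps S) X = unvec ((eps *\<^sub>R matrix_inv M) *v vecm X)"
    by (metis inv_f_f)
qed

lemma optimality_map_local_inverse:
  fixes S :: "real^'n^'m"
  assumes eps: "eps > 0" and S: "feasible S"
  obtains V G where "open V" "optimality_map eps S \<in> V" "continuous_on V G"
    "\<And>y. y \<in> V \<Longrightarrow> feasible (G y) \<and> optimality_map eps (G y) = y"
    "(G has_derivative inv (optimality_map_deriv eps S)) (at (optimality_map eps S))"
proof -
  let ?F = "optimality_map eps" and ?DF = "\<lambda>T. Blinfun (optimality_map_deriv eps T)"
  have DF: "blinfun_apply (?DF T) = optimality_map_deriv eps T" for T
    using bounded_linear_optimality_map_deriv by (rule bounded_linear_Blinfun_apply)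
  obtain L where "linear L" "L \<circ> optimality_map_deriv eps S = id"
    using linear_injective_left_inverse[OF _ inj_optimality_map_deriv[OF eps S]]
      bounded_linear_optimality_map_deriv bounded_linear.linear by blast
  then have left_inverse: "Blinfun L o\<^sub>L ?DF S = id_blinfun"
    by (intro blinfun_eqI)
      (simp add: DF bounded_linear_Blinfun_apply linear_conv_bounded_linear fun_eq_iff)
  have "(?F has_derivative blinfun_apply (?DF T)) (at T)" if "T \<in> {T. feasible T}" for T
    using has_derivative_optimality_map that by (simp add: DF)
  from inverse_function_theorem[OF open_feasible this continuous_on_optimality_map_deriv _ left_inverse]
    S
  obtain U' V G G' where "open V" "U' \<subseteq> {T. feasible T}" "S \<in> U'" "?F S \<in> V"
    and hom: "homeomorphism U' V ?F G"
    and G: "\<And>y. y \<in> V \<Longrightarrow> (G has_derivative G' y) (at y)"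
    and G': "\<And>y. y \<in> V \<Longrightarrow> G' y = inv (blinfun_apply (?DF (G y)))"
    by (metis mem_Collect_eq)
  have "G (?F S) = S" using hom \<open>S \<in> U'\<close> by (auto simp: homeomorphism_def)
  show ?thesis
  proof
    show "continuous_on V G" using hom by (auto simp: homeomorphism_def)
    show "feasible (G y) \<and> ?F (G y) = y" if "y \<in> V" for y
      using hom that \<open>U' \<subseteq> {T. feasible T}\<close> by (auto simp: homeomorphism_def)
    show "(G has_derivative inv (optimality_map_deriv eps S)) (at (?F S))"
      using G[OF \<open>?F S \<in> V\<close>] G'[OF \<open>?F S \<in> V\<close>] \<open>G (?F S) = S\<close> by (simp add: DF)
  qed fact+
qed

section \<open>The gradient of the value function\<close>

lemma has_derivative_from_gradient_sandwich:
  fixes f :: "'a::real_inner \<Rightarrow> real"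
  assumes "open V" "x \<in> V" "isCont G x"
    and sandwich: "\<And>y. y \<in> V \<Longrightarrow> (y - x) \<bullet> G x \<le> f y - f x \<and> f y - f x \<le> (y - x) \<bullet> G y"
  shows "(f has_derivative (\<lambda>h. G x \<bullet> h)) (at x)"
proof -
  obtain e where "e > 0" and e: "ball x e \<subseteq> V" using assms(1,2) open_contains_ball by blast
  show ?thesis
  proof (rule has_derivativeI_sandwich[OF \<open>e > 0\<close>])
    show "bounded_linear (\<lambda>h. G x \<bullet> h)" by (rule bounded_linear_inner_right)
    fix y assume "y \<noteq> x" "dist y x < e"
    then have "y \<in> V" using e by (auto simp: dist_commute)
    have "\<bar>f y - f x - G x \<bullet> (y - x)\<bar> \<le> (y - x) \<bullet> (G y - G x)"
      using sandwich[OF \<open>y \<in> V\<close>] by (simp add: inner_diff_right inner_commute)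
    also have "\<dots> \<le> norm (y - x) * norm (G y - G x)" by (rule norm_cauchy_schwarz)
    finally show "norm (f y - f x - G x \<bullet> (y - x)) / norm (y - x) \<le> norm (G y - G x)"
      using \<open>y \<noteq> x\<close> by (simp add: divide_le_eq mult.commute)
  next
    show "((\<lambda>y. norm (G y - G x)) \<longlongrightarrow> 0) (at x)"
      using \<open>isCont G x\<close> by (intro tendsto_norm_zero LIM_zero) (simp add: isCont_def)
  qed
qed

lemma objective_diff: "objective eps y T - objective eps B T = (y - B) \<bullet> T"
  by (simp add: objective_def frob_eq_inner inner_diff_left)

lemma has_derivative_Wt:
  assumes eps: "eps > 0" and "open V" "B \<in> V" "continuous_on V G"
    and G: "\<And>y. y \<in> V \<Longrightarrow> feasible (G y) \<and> optimality_map eps (G y) = y"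
  shows "(Wt eps has_derivative frob (G B)) (at B)"
proof -
  have Wt: "Wt eps y = objective eps y (G y)" if "y \<in> V" for y
    using G[OF that] Wt_eq_objective_at_stationary_point[OF eps] by metis
  have max: "objective eps y T \<le> objective eps y (G y)" if "y \<in> V" "feasible T" for y T
    using G[OF that(1)] stationary_point_is_maximizer[OF eps] that(2) by metis
  have "(Wt eps has_derivative (\<lambda>h. G B \<bullet> h)) (at B)"
  proof (rule has_derivative_from_gradient_sandwich[OF \<open>open V\<close> \<open>B \<in> V\<close>])
    show "isCont G B"
      using \<open>continuous_on V G\<close> \<open>open V\<close> \<open>B \<in> V\<close> continuous_on_eq_continuous_at by blast
    fix y assume "y \<in> V"
    show "(y - B) \<bullet> G B \<le> Wt eps y - Wt eps B \<and> Wt eps y - Wt eps B \<le> (y - B) \<bullet> G y"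
      using max[OF \<open>y \<in> V\<close> conjunct1[OF G[OF \<open>B \<in> V\<close>]]] max[OF \<open>B \<in> V\<close> conjunct1[OF G[OF \<open>y \<in> V\<close>]]]
        objective_diff[of eps y "G B" B] objective_diff[of eps y "G y" B] Wt[OF \<open>y \<in> V\<close>] Wt[OF \<open>B \<in> V\<close>]
      by linarith
  qed
  then show ?thesis by (simp add: frob_eq_inner[abs_def])
qed

theorem lemma7:
  fixes eps :: real and A S :: "real^'d2^'d1"
  assumes "eps > 0"
    and "feasible S"
    and "\<forall>S'. feasible S' \<longrightarrow> objective eps A S' \<le> objective eps A S"
  shows "has_hessian (Wt eps)
           (eps *\<^sub>R matrix_inv
              (eps\<^sup>2 *\<^sub>R kron (matrix_inv (mat 1 - transpose S ** S)) (matrix_inv (mat 1 - S ** transpose S))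
               + kron (transpose A) A ** commT))
           A"
proof -
  have A: "optimality_map eps S = A" using maximizer_is_stationary_point[OF assms] .
  obtain V G where "open V" "A \<in> V" "continuous_on V G"
    and G: "\<And>y. y \<in> V \<Longrightarrow> feasible (G y) \<and> optimality_map eps (G y) = y"
    and DG: "(G has_derivative inv (optimality_map_deriv eps S)) (at A)"
    using optimality_map_local_inverse[OF assms(1,2)] unfolding A by metis
  have "\<forall>\<^sub>F B in nhds A. (Wt eps has_derivative frob (G B)) (at B)"
    unfolding eventually_nhds
    using \<open>open V\<close> \<open>A \<in> V\<close> has_derivative_Wt[OF assms(1) \<open>open V\<close> _ \<open>continuous_on V G\<close> G] by blast
  with DG show ?thesis
    unfolding has_hessian_def inv_optimality_map_deriv[OF assms(1,2) A[symmetric]] by blast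
qed

end
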